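(* Let $(Q,Sp,I)$ be a skew-gentle triple. Then there is an isomorphism of $k$-vector spaces $kQ^{sp}/\langle I^{sg}\rangle\cong kQ^{sp}/\langle I^{sp}\rangle$. In particular $kQ^{sp}/\langle I^{sg}\rangle$ is finite dimensional if and only if $kQ^{sp}/\langle I^{sp}\rangle$ is finite dimensional.
   Context: $k$ is an algebraically closed field; quivers are finite and paths are composed right to left. A pair $(Q,I)$ with $I$ a set of paths of $Q$ is a gentle pair if: (G1) each vertex is the start of at most two arrows and the target of at most two arrows; (G2) every path in $I$ has length $2$; (G3) for each arrow $\alpha$ there is at most one arrow $\beta$ with $\beta\alpha\in I$ and at most one arrow $\gamma$ with $\gamma\alpha$ a path not in $I$; (G4) for each arrow $\alpha$ there is at most one arrow $\beta$ with $\alpha\beta\in I$ and at most one arrow $\gamma$ with $\alpha\gamma$ a path not in $I$. A triple $(Q,Sp,I)$ with $Q$ a quiver, $Sp\subseteq Q_0$ and $I$ a set of paths in $Q$ is skew-gentle if $(Q^{sp},I^{sp})$ is a gentle pair, where $Q^{sp}$ has vertices $Q_0$ and arrows $Q_1\cup\{\epsilon_i\mid i\in Sp\}$ with $\epsilon_i$ a new loop at $i$ (special loops), and $I^{sp}=I\cup\{\epsilon_i^2\mid i\in Sp\}$. Set $I^{sg}=I\cup\{\epsilon_i^2-\epsilon_i\mid i\in Sp\}$; $\langle X\rangle$ denotes the ideal of $kQ^{sp}$ generated by $X$. *)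

theory Defs
  imports "HOL-Computational_Algebra.Polynomial"
begin

definition alg_closed :: "'k::field itself \<Rightarrow> bool" where
  "alg_closed _ = (\<forall>p :: 'k poly. degree p > 0 \<longrightarrow> (\<exists>x. poly p x = 0))"

text \<open>A path is a triple (u, xs, w): start vertex u, arrows xs written in composition order
  (paths compose right to left, so xs = [a_n, ..., a_1] means a_n ... a_1, a_1 first),
  end vertex w.\<close>

type_synonym ('v,'b) path = "'v \<times> 'b list \<times> 'v"

definition valid_path :: "'v set \<Rightarrow> 'b set \<Rightarrow> ('b \<Rightarrow> 'v) \<Rightarrow> ('b \<Rightarrow> 'v) \<Rightarrow> ('v,'b) path \<Rightarrow> bool" where
  "valid_path V A s t p = (case p of (u, xs, w) \<Rightarrow>
     u \<in> V \<and> w \<in> V \<and> set xs \<subseteq> A \<and>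
     (if xs = [] then u = w
      else s (last xs) = u \<and> t (hd xs) = w \<and>
           (\<forall>i. Suc i < length xs \<longrightarrow> s (xs ! i) = t (xs ! Suc i))))"

definition pstart :: "('v,'b) path \<Rightarrow> 'v" where "pstart p = fst p"
definition parrs :: "('v,'b) path \<Rightarrow> 'b list" where "parrs p = fst (snd p)"
definition pend :: "('v,'b) path \<Rightarrow> 'v" where "pend p = snd (snd p)"

text \<open>Composition p q (first q, then p), meaningful when pend q = pstart p.\<close>
definition pcomp :: "('v,'b) path \<Rightarrow> ('v,'b) path \<Rightarrow> ('v,'b) path" where
  "pcomp p q = (pstart q, parrs p @ parrs q, pend p)"

text \<open>Elements of kQ: finitely supported k-valued functions on the paths of Q.\<close>
definition path_alg :: "'v set \<Rightarrow> 'b set \<Rightarrow> ('b \<Rightarrow> 'v) \<Rightarrow> ('b \<Rightarrow> 'v) \<Rightarrow> (('v,'b) path \<Rightarrow> 'k::field) set" where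
  "path_alg V A s t = {f. finite {p. f p \<noteq> 0} \<and> (\<forall>p. f p \<noteq> 0 \<longrightarrow> valid_path V A s t p)}"

definition vadd :: "('x \<Rightarrow> 'k::field) \<Rightarrow> ('x \<Rightarrow> 'k) \<Rightarrow> 'x \<Rightarrow> 'k" where
  "vadd f g = (\<lambda>r. f r + g r)"
definition vsub :: "('x \<Rightarrow> 'k::field) \<Rightarrow> ('x \<Rightarrow> 'k) \<Rightarrow> 'x \<Rightarrow> 'k" where
  "vsub f g = (\<lambda>r. f r - g r)"
definition vscale :: "'k::field \<Rightarrow> ('x \<Rightarrow> 'k) \<Rightarrow> 'x \<Rightarrow> 'k" where
  "vscale c f = (\<lambda>r. c * f r)"
definition vzero :: "'x \<Rightarrow> 'k::field" where "vzero = (\<lambda>r. 0)"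

text \<open>Multiplication in kQ (bilinear extension of path composition; non-composable
  pairs of paths multiply to 0).\<close>
definition amul :: "(('v,'b) path \<Rightarrow> 'k::field) \<Rightarrow> (('v,'b) path \<Rightarrow> 'k) \<Rightarrow> ('v,'b) path \<Rightarrow> 'k" where
  "amul f g = (\<lambda>r. \<Sum>(p,q) \<in> {(p,q). f p \<noteq> 0 \<and> g q \<noteq> 0 \<and> pend q = pstart p \<and> pcomp p q = r}.
                   f p * g q)"

definition pbasis :: "('v,'b) path \<Rightarrow> ('v,'b) path \<Rightarrow> 'k::field" where
  "pbasis p = (\<lambda>r. if r = p then 1 else 0)"

definition is_ideal :: "'v set \<Rightarrow> 'b set \<Rightarrow> ('b \<Rightarrow> 'v) \<Rightarrow> ('b \<Rightarrow> 'v) \<Rightarrow> (('v,'b) path \<Rightarrow> 'k::field) set \<Rightarrow> bool" where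
  "is_ideal V A s t J =
     (J \<subseteq> path_alg V A s t \<and> vzero \<in> J \<and>
      (\<forall>x\<in>J. \<forall>y\<in>J. vadd x y \<in> J) \<and>
      (\<forall>c x. x \<in> J \<longrightarrow> vscale c x \<in> J) \<and>
      (\<forall>a\<in>path_alg V A s t. \<forall>x\<in>J. amul a x \<in> J \<and> amul x a \<in> J))"

definition gen_ideal :: "'v set \<Rightarrow> 'b set \<Rightarrow> ('b \<Rightarrow> 'v) \<Rightarrow> ('b \<Rightarrow> 'v) \<Rightarrow> (('v,'b) path \<Rightarrow> 'k::field) set \<Rightarrow> (('v,'b) path \<Rightarrow> 'k) set" where
  "gen_ideal V A s t X = \<Inter>{J. is_ideal V A s t J \<and> X \<subseteq> J}"

text \<open>kQ/J1 and kQ/J2 are isomorphic k-vector spaces iff there is a k-linear map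
  \<phi> : kQ \<rightarrow> kQ inducing a bijection kQ/J1 \<rightarrow> kQ/J2, i.e. \<phi>(x) \<in> J2 \<longleftrightarrow> x \<in> J1
  (well-defined and injective) and every class of kQ/J2 is hit (surjective).\<close>
definition quot_iso :: "'v set \<Rightarrow> 'b set \<Rightarrow> ('b \<Rightarrow> 'v) \<Rightarrow> ('b \<Rightarrow> 'v) \<Rightarrow> (('v,'b) path \<Rightarrow> 'k::field) set \<Rightarrow> (('v,'b) path \<Rightarrow> 'k) set \<Rightarrow> bool" where
  "quot_iso V A s t J1 J2 =
     (\<exists>\<phi>. (\<forall>x\<in>path_alg V A s t. \<phi> x \<in> path_alg V A s t) \<and>
          (\<forall>x\<in>path_alg V A s t. \<forall>y\<in>path_alg V A s t. \<phi> (vadd x y) = vadd (\<phi> x) (\<phi> y)) \<and>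
          (\<forall>c. \<forall>x\<in>path_alg V A s t. \<phi> (vscale c x) = vscale c (\<phi> x)) \<and>
          (\<forall>x\<in>path_alg V A s t. \<phi> x \<in> J2 \<longleftrightarrow> x \<in> J1) \<and>
          (\<forall>y\<in>path_alg V A s t. \<exists>x\<in>path_alg V A s t. vsub (\<phi> x) y \<in> J2))"

definition lin_span :: "('x \<Rightarrow> 'k::field) set \<Rightarrow> ('x \<Rightarrow> 'k) set" where
  "lin_span S = {f. \<exists>T c. finite T \<and> T \<subseteq> S \<and> f = (\<lambda>r. \<Sum>g\<in>T. c g * g r)}"

text \<open>kQ/J is finite dimensional: spanned by the classes of finitely many elements.\<close>
definition fin_dim_quot :: "'v set \<Rightarrow> 'b set \<Rightarrow> ('b \<Rightarrow> 'v) \<Rightarrow> ('b \<Rightarrow> 'v) \<Rightarrow> (('v,'b) path \<Rightarrow> 'k::field) set \<Rightarrow> bool" where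
  "fin_dim_quot V A s t J =
     (\<exists>S. finite S \<and> S \<subseteq> path_alg V A s t \<and>
          (\<forall>x\<in>path_alg V A s t. \<exists>y\<in>lin_span S. vsub x y \<in> J))"

definition gentle_pair :: "'v set \<Rightarrow> 'b set \<Rightarrow> ('b \<Rightarrow> 'v) \<Rightarrow> ('b \<Rightarrow> 'v) \<Rightarrow> ('v,'b) path set \<Rightarrow> bool" where
  "gentle_pair V A s t R =
     ((\<forall>v\<in>V. card {a\<in>A. s a = v} \<le> 2 \<and> card {a\<in>A. t a = v} \<le> 2) \<and>
      (\<forall>p\<in>R. length (parrs p) = 2) \<and>
      (\<forall>\<alpha>\<in>A. card {\<beta>\<in>A. (s \<alpha>, [\<beta>, \<alpha>], t \<beta>) \<in> R} \<le> 1 \<and>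
               card {\<gamma>\<in>A. s \<gamma> = t \<alpha> \<and> (s \<alpha>, [\<gamma>, \<alpha>], t \<gamma>) \<notin> R} \<le> 1) \<and>
      (\<forall>\<alpha>\<in>A. card {\<beta>\<in>A. (s \<beta>, [\<alpha>, \<beta>], t \<alpha>) \<in> R} \<le> 1 \<and>
               card {\<gamma>\<in>A. s \<alpha> = t \<gamma> \<and> (s \<gamma>, [\<alpha>, \<gamma>], t \<alpha>) \<notin> R} \<le> 1))"

text \<open>Arrows of Q^sp: Inl a for a \<in> Q1, Inr i for the special loop \<epsilon>_i, i \<in> Sp.\<close>
definition sp_arrows :: "'a set \<Rightarrow> 'v set \<Rightarrow> ('a + 'v) set" where
  "sp_arrows Q1 Sp = Inl ` Q1 \<union> Inr ` Sp"

fun sp_src :: "('a \<Rightarrow> 'v) \<Rightarrow> 'a + 'v \<Rightarrow> 'v" where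
  "sp_src s (Inl a) = s a"
| "sp_src s (Inr i) = i"

fun sp_tgt :: "('a \<Rightarrow> 'v) \<Rightarrow> 'a + 'v \<Rightarrow> 'v" where
  "sp_tgt t (Inl a) = t a"
| "sp_tgt t (Inr i) = i"

definition lift_path :: "('v,'a) path \<Rightarrow> ('v, 'a + 'v) path" where
  "lift_path p = (pstart p, map Inl (parrs p), pend p)"

definition eps :: "'v \<Rightarrow> ('v, 'a + 'v) path" where
  "eps i = (i, [Inr i], i)"

definition eps_sq :: "'v \<Rightarrow> ('v, 'a + 'v) path" where
  "eps_sq i = (i, [Inr i, Inr i], i)"

definition I_sp :: "('v,'a) path set \<Rightarrow> 'v set \<Rightarrow> ('v, 'a + 'v) path set" where
  "I_sp I Sp = lift_path ` I \<union> eps_sq ` Sp"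

definition skew_gentle :: "'v set \<Rightarrow> 'a set \<Rightarrow> ('a \<Rightarrow> 'v) \<Rightarrow> ('a \<Rightarrow> 'v) \<Rightarrow> 'v set \<Rightarrow> ('v,'a) path set \<Rightarrow> bool" where
  "skew_gentle V Q1 s t Sp I =
     (finite V \<and> finite Q1 \<and> (\<forall>a\<in>Q1. s a \<in> V \<and> t a \<in> V) \<and> Sp \<subseteq> V \<and>
      (\<forall>p\<in>I. valid_path V Q1 s t p) \<and>
      gentle_pair V (sp_arrows Q1 Sp) (sp_src s) (sp_tgt t) (I_sp I Sp))"

definition Isp_gens :: "('v,'a) path set \<Rightarrow> 'v set \<Rightarrow> (('v, 'a + 'v) path \<Rightarrow> 'k::field) set" where
  "Isp_gens I Sp = pbasis ` (I_sp I Sp)"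

definition Isg_gens :: "('v,'a) path set \<Rightarrow> 'v set \<Rightarrow> (('v, 'a + 'v) path \<Rightarrow> 'k::field) set" where
  "Isg_gens I Sp = pbasis ` (lift_path ` I) \<union> (\<lambda>i. vsub (pbasis (eps_sq i)) (pbasis (eps i))) ` Sp"

definition ideal_sp :: "'v set \<Rightarrow> 'a set \<Rightarrow> ('a \<Rightarrow> 'v) \<Rightarrow> ('a \<Rightarrow> 'v) \<Rightarrow> 'v set \<Rightarrow> ('v,'a) path set \<Rightarrow> (('v, 'a + 'v) path \<Rightarrow> 'k::field) set" where
  "ideal_sp V Q1 s t Sp I = gen_ideal V (sp_arrows Q1 Sp) (sp_src s) (sp_tgt t) (Isp_gens I Sp)"

definition ideal_sg :: "'v set \<Rightarrow> 'a set \<Rightarrow> ('a \<Rightarrow> 'v) \<Rightarrow> ('a \<Rightarrow> 'v) \<Rightarrow> 'v set \<Rightarrow> ('v,'a) path set \<Rightarrow> (('v, 'a + 'v) path \<Rightarrow> 'k::field) set" where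
  "ideal_sg V Q1 s t Sp I = gen_ideal V (sp_arrows Q1 Sp) (sp_src s) (sp_tgt t) (Isg_gens I Sp)"

end

theory Submission
  imports Defs
begin

text \<open>
  Both quotients have a basis of normal paths: the paths of \<open>Q\<^sup>s\<^sup>p\<close> containing neither a
  relation of \<open>I\<close> nor a factor \<open>\<epsilon>\<^sub>i \<epsilon>\<^sub>i\<close>. Modulo \<open>\<langle>I\<^sup>s\<^sup>p\<rangle>\<close> a path is congruent to
  itself if it is normal and to \<open>0\<close> otherwise. Modulo \<open>\<langle>I\<^sup>s\<^sup>g\<rangle>\<close>, where
  \<open>\<epsilon>\<^sub>i\<^sup>2 \<equiv> \<epsilon>\<^sub>i\<close>, it is congruent to the path obtained by shrinking every run of
  \<open>\<epsilon>\<^sub>i\<close>'s to a single \<open>\<epsilon>\<^sub>i\<close>, or to \<open>0\<close> if a relation of \<open>I\<close> occurs in it; this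
  is well defined because the relations of \<open>I\<close> have length two and involve no special loop.
  Each reduction extends linearly to \<open>kQ\<^sup>s\<^sup>p\<close>; its kernel is an ideal containing the
  generators, and every element is congruent to its reduction, so the generated ideal is
  exactly the kernel. Each reduction fixes the normal paths produced by the other, hence it
  induces an isomorphism between the two quotients, and finite dimensionality is transported
  along such isomorphisms.
\<close>

lemma path_sel [simp]: "pstart (u, xs, w) = u" "parrs (u, xs, w) = xs" "pend (u, xs, w) = w"
  by (simp_all add: pstart_def parrs_def pend_def)

lemma pstart_parrs_pend: "(pstart p, parrs p, pend p) = p"
  by (simp add: pstart_def parrs_def pend_def)

lemma pcomp_sel [simp]:
  "pstart (pcomp p q) = pstart q" "parrs (pcomp p q) = parrs p @ parrs q" "pend (pcomp p q) = pend p"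
  by (simp_all add: pcomp_def)

locale quiver =
  fixes V :: "'v set" and A :: "'b set" and s t :: "'b \<Rightarrow> 'v"
  assumes arrow_ends: "a \<in> A \<Longrightarrow> s a \<in> V \<and> t a \<in> V"
begin

abbreviation vp where "vp \<equiv> valid_path V A s t"
abbreviation PA where "PA \<equiv> path_alg V A s t"

lemma valid_path_Nil [simp]: "vp (u, [], w) \<longleftrightarrow> u \<in> V \<and> w = u"
  by (auto simp: valid_path_def)

lemma valid_path_Cons:
  "vp (u, a # xs, w) \<longleftrightarrow> a \<in> A \<and> t a = w \<and> vp (u, xs, s a)"
proof (cases xs)
  case Nil
  then show ?thesis using arrow_ends by (auto simp: valid_path_def)
next
  case (Cons b ys)
  have "(\<forall>i. Suc i < length (a # xs) \<longrightarrow> s ((a # xs) ! i) = t ((a # xs) ! Suc i)) \<longleftrightarrow>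
        s a = t b \<and> (\<forall>i. Suc i < length xs \<longrightarrow> s (xs ! i) = t (xs ! Suc i))"
    using Cons by (auto simp: All_less_Suc2)
  then show ?thesis using Cons arrow_ends by (auto simp: valid_path_def)
qed

lemma valid_path_append:
  "vp (u, xs @ ys, w) \<longleftrightarrow> (\<exists>m. vp (m, xs, w) \<and> vp (u, ys, m))"
proof (induction xs arbitrary: w)
  case Nil
  then show ?case by (auto simp: valid_path_def)
next
  case (Cons a xs)
  then show ?case by (auto simp: valid_path_Cons)
qed

lemma valid_path_arrows: "vp p \<Longrightarrow> set (parrs p) \<subseteq> A"
  by (auto simp: valid_path_def split: prod.splits)

lemma valid_pcomp: "vp p \<Longrightarrow> vp q \<Longrightarrow> pend q = pstart p \<Longrightarrow> vp (pcomp p q)"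
  by (cases p; cases q) (auto simp: pcomp_def valid_path_append)

end

definition supp :: "('x \<Rightarrow> 'k::zero) \<Rightarrow> 'x set" where
  "supp f = {p. f p \<noteq> 0}"

lemma supp_vadd: "supp (vadd f g) \<subseteq> supp f \<union> supp g"
  and supp_vsub: "supp (vsub f g) \<subseteq> supp f \<union> supp g"
  and supp_vscale: "supp (vscale c f) \<subseteq> supp f"
  by (auto simp: supp_def vadd_def vsub_def vscale_def)

lemma supp_pbasis [simp]: "supp (pbasis p :: _ \<Rightarrow> 'k::field) = {p}"
  by (simp add: supp_def pbasis_def)

lemma vsub_self [simp]: "vsub f f = vzero"
  by (simp add: vsub_def vzero_def)

lemma vsub_as_vadd: "vsub f g = vadd f (vscale (-1) g)"
  by (simp add: vsub_def vadd_def vscale_def)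

lemma pbasis_expansion:
  assumes "finite (supp f)"
  shows "f = (\<lambda>r. \<Sum>p\<in>supp f. f p * pbasis p r)"
proof
  fix r
  have "(\<Sum>p\<in>supp f. f p * pbasis p r) = (\<Sum>p\<in>supp f. if p = r then f p else 0)"
    by (rule sum.cong) (auto simp: pbasis_def)
  also have "\<dots> = f r"
    using assms by (simp add: sum.delta' supp_def)
  finally show "f r = (\<Sum>p\<in>supp f. f p * pbasis p r)" ..
qed

lemma amul_altdef:
  assumes "finite F" "finite G" "supp f \<subseteq> F" "supp g \<subseteq> G"
  shows "amul f g r =
    (\<Sum>(p, q)\<in>{(p, q). p \<in> F \<and> q \<in> G \<and> pend q = pstart p \<and> pcomp p q = r}. f p * g q)"
  unfolding amul_def
proof (rule sum.mono_neutral_left)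
  show "finite {(p, q). p \<in> F \<and> q \<in> G \<and> pend q = pstart p \<and> pcomp p q = r}"
    by (rule finite_subset[of _ "F \<times> G"]) (use assms in auto)
qed (use assms in \<open>auto simp: supp_def\<close>)

lemma amul_pbasis:
  assumes "pend q = pstart p"
  shows "amul (pbasis p) (pbasis q) = (pbasis (pcomp p q) :: _ \<Rightarrow> 'k::field)"
proof
  fix r
  have "{(p', q'). pbasis p p' \<noteq> (0::'k) \<and> pbasis q q' \<noteq> (0::'k) \<and> pend q' = pstart p' \<and> pcomp p' q' = r}
        = (if pcomp p q = r then {(p, q)} else {})"
    using assms by (auto simp: pbasis_def)
  then show "amul (pbasis p) (pbasis q) r = (pbasis (pcomp p q) r :: 'k)"
    by (simp add: amul_def pbasis_def)
qed

lemma amul_vsub_left: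
  assumes "finite (supp f)" "finite (supp g)" "finite (supp h)"
  shows "amul (vsub f g) h = vsub (amul f h) (amul g h)"
proof
  fix r
  let ?P = "{(p, q). p \<in> supp f \<union> supp g \<and> q \<in> supp h \<and> pend q = pstart p \<and> pcomp p q = r}"
  have "amul (vsub f g) h r = (\<Sum>(p, q)\<in>?P. vsub f g p * h q)"
    and "amul f h r = (\<Sum>(p, q)\<in>?P. f p * h q)" and "amul g h r = (\<Sum>(p, q)\<in>?P. g p * h q)"
    by (rule amul_altdef; use assms supp_vsub[of f g] in auto)+
  then show "amul (vsub f g) h r = vsub (amul f h) (amul g h) r"
    by (simp add: vsub_def left_diff_distrib sum_subtractf case_prod_unfold)
qed

lemma amul_vsub_right:
  assumes "finite (supp f)" "finite (supp g)" "finite (supp h)"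
  shows "amul h (vsub f g) = vsub (amul h f) (amul h g)"
proof
  fix r
  let ?P = "{(p, q). p \<in> supp h \<and> q \<in> supp f \<union> supp g \<and> pend q = pstart p \<and> pcomp p q = r}"
  have "amul h (vsub f g) r = (\<Sum>(p, q)\<in>?P. h p * vsub f g q)"
    and "amul h f r = (\<Sum>(p, q)\<in>?P. h p * f q)" and "amul h g r = (\<Sum>(p, q)\<in>?P. h p * g q)"
    by (rule amul_altdef; use assms supp_vsub[of f g] in auto)+
  then show "amul h (vsub f g) r = vsub (amul h f) (amul h g) r"
    by (simp add: vsub_def right_diff_distrib sum_subtractf case_prod_unfold)
qed

lemma supp_amul:
  assumes "r \<in> supp (amul f g)"
  obtains p q where "p \<in> supp f" "q \<in> supp g" "pend q = pstart p" "r = pcomp p q"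
proof -
  from assms have "(\<Sum>(p, q)\<in>{(p, q). f p \<noteq> 0 \<and> g q \<noteq> 0 \<and> pend q = pstart p \<and> pcomp p q = r}.
      f p * g q) \<noteq> 0"
    by (simp add: supp_def amul_def)
  then obtain x where "x \<in> {(p, q). f p \<noteq> 0 \<and> g q \<noteq> 0 \<and> pend q = pstart p \<and> pcomp p q = r}"
    by (rule sum.not_neutral_contains_not_neutral)
  then show ?thesis using that by (cases x) (auto simp: supp_def)
qed

context quiver
begin

lemma path_alg_iff: "f \<in> PA \<longleftrightarrow> finite (supp f) \<and> (\<forall>p\<in>supp f. vp p)"
  by (auto simp: path_alg_def supp_def)

lemma path_alg_finite_supp: "f \<in> PA \<Longrightarrow> finite (supp f)"
  by (simp add: path_alg_iff)

lemma pbasis_in_path_alg: "vp p \<Longrightarrow> (pbasis p :: _ \<Rightarrow> 'k::field) \<in> PA"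
  by (simp add: path_alg_iff)

lemma vzero_in_path_alg: "vzero \<in> PA"
  by (simp add: path_alg_iff supp_def vzero_def)

lemma vadd_in_path_alg: "f \<in> PA \<Longrightarrow> g \<in> PA \<Longrightarrow> vadd f g \<in> PA"
  and vsub_in_path_alg: "f \<in> PA \<Longrightarrow> g \<in> PA \<Longrightarrow> vsub f g \<in> PA"
  and vscale_in_path_alg: "f \<in> PA \<Longrightarrow> vscale c f \<in> PA"
  unfolding path_alg_iff
  using supp_vadd[of f g] supp_vsub[of f g] supp_vscale[of c f]
  by (meson UnE finite_UnI finite_subset subsetD)+

lemma amul_in_path_alg:
  assumes "f \<in> PA" "g \<in> PA"
  shows "amul f g \<in> PA"
proof -
  let ?P = "{(p, q). p \<in> supp f \<and> q \<in> supp g \<and> pend q = pstart p}"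
  have "finite ?P"
    by (rule finite_subset[of _ "supp f \<times> supp g"]) (use assms in \<open>auto simp: path_alg_iff\<close>)
  moreover have "supp (amul f g) \<subseteq> (\<lambda>(p, q). pcomp p q) ` ?P"
    by (force elim: supp_amul)
  moreover have "vp r" if "r \<in> supp (amul f g)" for r
    using that assms by (auto elim!: supp_amul intro!: valid_pcomp simp: path_alg_iff)
  ultimately show ?thesis
    by (meson finite_imageI finite_subset path_alg_iff)
qed

end

lemma
  assumes "is_ideal V A s t J"
  shows ideal_subset: "J \<subseteq> path_alg V A s t"
    and ideal_vzero: "vzero \<in> J"
    and ideal_vadd: "x \<in> J \<Longrightarrow> y \<in> J \<Longrightarrow> vadd x y \<in> J"
    and ideal_vscale: "x \<in> J \<Longrightarrow> vscale c x \<in> J"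
    and ideal_amul_left: "a \<in> path_alg V A s t \<Longrightarrow> x \<in> J \<Longrightarrow> amul a x \<in> J"
    and ideal_amul_right: "a \<in> path_alg V A s t \<Longrightarrow> x \<in> J \<Longrightarrow> amul x a \<in> J"
  using assms by (auto simp: is_ideal_def)

lemma ideal_vsub: "is_ideal V A s t J \<Longrightarrow> x \<in> J \<Longrightarrow> y \<in> J \<Longrightarrow> vsub x y \<in> J"
  by (simp add: vsub_as_vadd ideal_vadd ideal_vscale)

lemma ideal_vsub_trans:
  "is_ideal V A s t J \<Longrightarrow> vsub f g \<in> J \<Longrightarrow> vsub g h \<in> J \<Longrightarrow> vsub f h \<in> J"
  using ideal_vadd[of V A s t J "vsub f g" "vsub g h"] by (simp add: vadd_def vsub_def)

lemma ideal_lincomb: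
  assumes "is_ideal V A s t J" "finite T" "\<And>p. p \<in> T \<Longrightarrow> h p \<in> J"
  shows "(\<lambda>r. \<Sum>p\<in>T. c p * h p r) \<in> J"
  using assms(2,3)
proof (induction T rule: finite_induct)
  case empty
  then show ?case using ideal_vzero[OF assms(1)] by (simp add: vzero_def)
next
  case (insert p T)
  then have "(\<lambda>r. \<Sum>q\<in>insert p T. c q * h q r) = vadd (vscale (c p) (h p)) (\<lambda>r. \<Sum>q\<in>T. c q * h q r)"
    by (simp add: vadd_def vscale_def)
  then show ?case using insert assms(1) by (simp add: ideal_vadd ideal_vscale)
qed

context quiver
begin

lemma is_ideal_path_alg: "is_ideal V A s t (PA :: (_ \<Rightarrow> 'k::field) set)"
  unfolding is_ideal_def
  using vzero_in_path_alg vadd_in_path_alg vscale_in_path_alg amul_in_path_alg by blast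

lemma is_ideal_Inter:
  assumes "F \<noteq> {}" "\<And>J. J \<in> F \<Longrightarrow> is_ideal V A s t (J :: (_ \<Rightarrow> 'k::field) set)"
  shows "is_ideal V A s t (\<Inter>F)"
  unfolding is_ideal_def
proof (intro conjI ballI allI impI)
  show "\<Inter>F \<subseteq> PA" using assms ideal_subset by blast
  show "vzero \<in> \<Inter>F" using assms(2) ideal_vzero by blast
next
  fix x y assume "x \<in> \<Inter>F" "y \<in> \<Inter>F"
  then show "vadd x y \<in> \<Inter>F" using assms(2) ideal_vadd by blast
next
  fix c x assume "x \<in> \<Inter>F"
  then show "vscale c x \<in> \<Inter>F" using assms(2) ideal_vscale by blast
next
  fix a x :: "_ \<Rightarrow> 'k" assume "a \<in> PA" "x \<in> \<Inter>F"
  then show "amul a x \<in> \<Inter>F" "amul x a \<in> \<Inter>F"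
    using assms(2) ideal_amul_left ideal_amul_right by blast+
qed

lemma gen_ideal_is_ideal:
  "X \<subseteq> (PA :: (_ \<Rightarrow> 'k::field) set) \<Longrightarrow> is_ideal V A s t (gen_ideal V A s t X)"
  unfolding gen_ideal_def by (rule is_ideal_Inter) (use is_ideal_path_alg in blast)+

lemma gen_ideal_superset: "X \<subseteq> gen_ideal V A s t X"
  by (auto simp: gen_ideal_def)

lemma gen_ideal_least: "is_ideal V A s t J \<Longrightarrow> X \<subseteq> J \<Longrightarrow> gen_ideal V A s t X \<subseteq> J"
  by (auto simp: gen_ideal_def)

lemma pbasis_congruence_pcomp_left:
  assumes J: "is_ideal V A s t J" and "vsub (pbasis q) (pbasis q') \<in> (J :: (_ \<Rightarrow> 'k::field) set)"
    and "vp p" "pend q = pstart p" "pend q' = pstart p"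
  shows "vsub (pbasis (pcomp p q)) (pbasis (pcomp p q')) \<in> J"
proof -
  have "amul (pbasis p) (vsub (pbasis q) (pbasis q')) \<in> J"
    using assms by (intro ideal_amul_left[OF J] pbasis_in_path_alg)
  then show ?thesis
    using assms by (simp add: amul_vsub_right amul_pbasis)
qed

lemma pbasis_congruence_pcomp_right:
  assumes J: "is_ideal V A s t J" and "vsub (pbasis p) (pbasis p') \<in> (J :: (_ \<Rightarrow> 'k::field) set)"
    and "vp q" "pend q = pstart p" "pend q = pstart p'"
  shows "vsub (pbasis (pcomp p q)) (pbasis (pcomp p' q)) \<in> J"
proof -
  have "amul (vsub (pbasis p) (pbasis p')) (pbasis q) \<in> J"
    using assms by (intro ideal_amul_right[OF J] pbasis_in_path_alg)
  then show ?thesis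
    using assms by (simp add: amul_vsub_left amul_pbasis)
qed

lemma pbasis_pcomp_mem_ideal:
  assumes J: "is_ideal V A s t J" and "pbasis q \<in> J" "vp p" "vp q" "vp r"
    and "pend q = pstart p" "pend r = pstart q"
  shows "pbasis (pcomp (pcomp p q) r) \<in> (J :: (_ \<Rightarrow> 'k::field) set)"
  using assms
  by (simp add: amul_pbasis[symmetric] ideal_amul_left ideal_amul_right pbasis_in_path_alg)

end

lemma lin_span_image:
  fixes c :: "_ \<Rightarrow> 'k::field"
  assumes "finite T" "T \<subseteq> S"
  shows "(\<lambda>r. \<Sum>g\<in>T. c g * \<phi> g r) \<in> lin_span (\<phi> ` S)"
proof -
  let ?c = "\<lambda>h. \<Sum>g\<in>{g\<in>T. \<phi> g = h}. c g"
  have "(\<lambda>r. \<Sum>g\<in>T. c g * \<phi> g r) = (\<lambda>r. \<Sum>h\<in>\<phi> ` T. ?c h * h r)"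
  proof
    fix r
    show "(\<Sum>g\<in>T. c g * \<phi> g r) = (\<Sum>h\<in>\<phi> ` T. ?c h * h r)"
      unfolding sum.image_gen[OF assms(1), where g = \<phi> and h = "\<lambda>g. c g * \<phi> g r"]
      by (rule sum.cong[OF refl]) (simp add: sum_distrib_right)
  qed
  then show ?thesis
    unfolding lin_span_def using assms by (intro CollectI exI[of _ "\<phi> ` T"] exI[of _ ?c]) auto
qed

context quiver
begin

lemma lincomb_in_path_alg: "finite T \<Longrightarrow> T \<subseteq> PA \<Longrightarrow> (\<lambda>r. \<Sum>g\<in>T. c g * g r) \<in> PA"
  by (rule ideal_lincomb[OF is_ideal_path_alg]) auto

lemma linear_map_lincomb:
  fixes \<phi> :: "(('v, 'b) path \<Rightarrow> 'k::field) \<Rightarrow> ('v, 'b) path \<Rightarrow> 'k"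
  assumes additive: "\<forall>x\<in>PA. \<forall>y\<in>PA. \<phi> (vadd x y) = vadd (\<phi> x) (\<phi> y)"
    and homogeneous: "\<forall>c. \<forall>x\<in>PA. \<phi> (vscale c x) = vscale c (\<phi> x)"
    and "finite T" "T \<subseteq> PA"
  shows "\<phi> (\<lambda>r. \<Sum>g\<in>T. c g * g r) = (\<lambda>r. \<Sum>g\<in>T. c g * \<phi> g r)"
  using \<open>finite T\<close> \<open>T \<subseteq> PA\<close>
proof (induction T rule: finite_induct)
  case empty
  have "\<phi> vzero = \<phi> (vscale 0 vzero)" by (simp add: vscale_def vzero_def)
  also have "\<dots> = vscale 0 (\<phi> vzero)" using homogeneous vzero_in_path_alg by blast
  finally show ?case by (simp add: vscale_def vzero_def)
next
  case (insert g T)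
  have split: "(\<lambda>r. \<Sum>h\<in>insert g T. c h * g' h r) = vadd (vscale (c g) (g' g)) (\<lambda>r. \<Sum>h\<in>T. c h * g' h r)"
    for g' :: "_ \<Rightarrow> _ \<Rightarrow> 'k"
    using insert.hyps by (simp add: vadd_def vscale_def)
  have rest: "(\<lambda>r. \<Sum>h\<in>T. c h * h r) \<in> PA" and g: "g \<in> PA"
    using insert.hyps insert.prems lincomb_in_path_alg by auto
  have "\<phi> (vadd (vscale (c g) g) (\<lambda>r. \<Sum>h\<in>T. c h * h r)) =
      vadd (\<phi> (vscale (c g) g)) (\<phi> (\<lambda>r. \<Sum>h\<in>T. c h * h r))"
    using additive vscale_in_path_alg[OF g] rest by blast
  also have "\<phi> (vscale (c g) g) = vscale (c g) (\<phi> g)"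
    using homogeneous g by blast
  finally
  show ?case
    using insert.IH insert.prems by (simp only: split[of "\<lambda>h. h"] split[of \<phi>]) simp
qed

lemma fin_dim_quot_transfer:
  assumes J2: "is_ideal V A s t J2" and iso: "quot_iso V A s t J1 J2"
    and fin: "fin_dim_quot V A s t (J1 :: (_ \<Rightarrow> 'k::field) set)"
  shows "fin_dim_quot V A s t J2"
proof -
  obtain \<phi> where closed: "\<forall>x\<in>PA. \<phi> x \<in> PA"
    and additive: "\<forall>x\<in>PA. \<forall>y\<in>PA. \<phi> (vadd x y) = vadd (\<phi> x) (\<phi> y)"
    and homogeneous: "\<forall>c. \<forall>x\<in>PA. \<phi> (vscale c x) = vscale c (\<phi> x)"
    and reflects: "\<forall>x\<in>PA. \<phi> x \<in> J2 \<longleftrightarrow> x \<in> J1"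
    and onto: "\<forall>y\<in>PA. \<exists>x\<in>PA. vsub (\<phi> x) y \<in> J2"
    using iso unfolding quot_iso_def by blast
  obtain S where S: "finite S" "S \<subseteq> PA" and spans: "\<forall>x\<in>PA. \<exists>z\<in>lin_span S. vsub x z \<in> J1"
    using fin unfolding fin_dim_quot_def by blast
  have "\<exists>z\<in>lin_span (\<phi> ` S). vsub y z \<in> J2" if y: "y \<in> PA" for y
  proof -
    obtain x where x: "x \<in> PA" "vsub (\<phi> x) y \<in> J2" using onto y by blast
    obtain z where "z \<in> lin_span S" and xz: "vsub x z \<in> J1" using spans x(1) by blast
    then obtain T c where T: "finite T" "T \<subseteq> S" and z: "z = (\<lambda>r. \<Sum>g\<in>T. c g * g r)"
      unfolding lin_span_def by blast
    have zPA: "z \<in> PA" using T S(2) z lincomb_in_path_alg by blast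
    have \<phi>z: "\<phi> z = (\<lambda>r. \<Sum>g\<in>T. c g * \<phi> g r)"
      using linear_map_lincomb[OF additive homogeneous] T S(2) z by blast
    have "\<phi> (vsub x z) = vadd (\<phi> x) (\<phi> (vscale (-1) z))"
      unfolding vsub_as_vadd using additive x(1) vscale_in_path_alg[OF zPA] by blast
    also have "\<dots> = vsub (\<phi> x) (\<phi> z)"
      unfolding vsub_as_vadd using homogeneous zPA by simp
    finally have "\<phi> (vsub x z) = vsub (\<phi> x) (\<phi> z)" .
    then have "vsub (\<phi> x) (\<phi> z) \<in> J2"
      using reflects xz x(1) zPA vsub_in_path_alg by metis
    then have "vsub (vsub (\<phi> x) (\<phi> z)) (vsub (\<phi> x) y) \<in> J2"
      using ideal_vsub[OF J2] x(2) by blast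
    moreover have "vsub (vsub (\<phi> x) (\<phi> z)) (vsub (\<phi> x) y) = vsub y (\<phi> z)"
      by (simp add: vsub_def)
    ultimately show ?thesis using lin_span_image[OF T, of c \<phi>] \<phi>z by auto
  qed
  moreover have "finite (\<phi> ` S)" "\<phi> ` S \<subseteq> PA" using S closed by auto
  ultimately show ?thesis unfolding fin_dim_quot_def by blast
qed

end

section \<open>Reductions of paths\<close>

definition pushforward :: "('x \<Rightarrow> 'y option) \<Rightarrow> ('x \<Rightarrow> 'k::comm_monoid_add) \<Rightarrow> 'y \<Rightarrow> 'k" where
  "pushforward red f = (\<lambda>r. \<Sum>p\<in>{p. f p \<noteq> 0 \<and> red p = Some r}. f p)"

lemma pushforward_altdef:
  assumes "finite F" "supp f \<subseteq> F"
  shows "pushforward red f r = (\<Sum>p\<in>{p\<in>F. red p = Some r}. f p)"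
  unfolding pushforward_def
  by (rule sum.mono_neutral_left) (use assms in \<open>auto simp: supp_def\<close>)

lemma supp_pushforward:
  assumes "r \<in> supp (pushforward red f)"
  obtains p where "p \<in> supp f" "red p = Some r"
proof -
  from assms have "(\<Sum>p\<in>{p. f p \<noteq> 0 \<and> red p = Some r}. f p) \<noteq> 0"
    by (simp add: supp_def pushforward_def)
  then obtain p where "p \<in> {p. f p \<noteq> 0 \<and> red p = Some r}"
    by (rule sum.not_neutral_contains_not_neutral)
  then show ?thesis using that by (auto simp: supp_def)
qed

lemma finite_supp_pushforward:
  assumes "finite (supp f)"
  shows "finite (supp (pushforward red f))"
proof (rule finite_subset)
  show "supp (pushforward red f) \<subseteq> (\<lambda>p. the (red p)) ` supp f"
    by (force elim: supp_pushforward)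
qed (use assms in simp)

lemma pushforward_vzero [simp]: "pushforward red vzero = vzero"
  by (simp add: pushforward_def vzero_def)

lemma pushforward_pbasis:
  "pushforward red (pbasis p :: _ \<Rightarrow> 'k::field) = (case red p of None \<Rightarrow> vzero | Some q \<Rightarrow> pbasis q)"
proof
  fix r
  have "pushforward red (pbasis p :: _ \<Rightarrow> 'k) r = (\<Sum>p'\<in>{p'\<in>{p}. red p' = Some r}. pbasis p p')"
    by (rule pushforward_altdef) auto
  also have "{p'\<in>{p}. red p' = Some r} = (if red p = Some r then {p} else {})"
    by auto
  finally show "pushforward red (pbasis p :: _ \<Rightarrow> 'k) r = (case red p of None \<Rightarrow> vzero | Some q \<Rightarrow> pbasis q) r"
    by (cases "red p") (auto simp: pbasis_def vzero_def)
qed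

lemma pushforward_vadd:
  assumes "finite (supp f)" "finite (supp g)"
  shows "pushforward red (vadd f g) = vadd (pushforward red f) (pushforward red g)"
proof
  fix r
  let ?F = "supp f \<union> supp g"
  have "pushforward red (vadd f g) r = (\<Sum>p\<in>{p\<in>?F. red p = Some r}. vadd f g p)"
    and "pushforward red f r = (\<Sum>p\<in>{p\<in>?F. red p = Some r}. f p)"
    and "pushforward red g r = (\<Sum>p\<in>{p\<in>?F. red p = Some r}. g p)"
    by (rule pushforward_altdef; use assms supp_vadd[of f g] in auto)+
  then show "pushforward red (vadd f g) r = vadd (pushforward red f) (pushforward red g) r"
    by (simp add: vadd_def sum.distrib)
qed

lemma pushforward_vscale:
  assumes "finite (supp f)"
  shows "pushforward red (vscale c f) = vscale c (pushforward red f)"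
proof
  fix r
  have "pushforward red (vscale c f) r = (\<Sum>p\<in>{p\<in>supp f. red p = Some r}. vscale c f p)"
    and "pushforward red f r = (\<Sum>p\<in>{p\<in>supp f. red p = Some r}. f p)"
    by (rule pushforward_altdef; use assms supp_vscale[of c f] in auto)+
  then show "pushforward red (vscale c f) r = vscale c (pushforward red f) r"
    by (simp add: vscale_def sum_distrib_left)
qed

lemma pushforward_vsub:
  assumes "finite (supp f)" "finite (supp g)"
  shows "pushforward red (vsub f g) = vsub (pushforward red f) (pushforward red g)"
  using assms supp_vscale[of "-1" g]
  by (simp add: vsub_as_vadd pushforward_vadd pushforward_vscale finite_subset)

lemma pushforward_lincomb:
  fixes c :: "'i \<Rightarrow> 'k::field"
  assumes "finite T" "\<And>i. i \<in> T \<Longrightarrow> finite (supp (h i))"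
  shows "pushforward red (\<lambda>r. \<Sum>i\<in>T. c i * h i r) = (\<lambda>r. \<Sum>i\<in>T. c i * pushforward red (h i) r)"
  using assms
proof (induction T rule: finite_induct)
  case empty
  then show ?case by (simp add: pushforward_def)
next
  case (insert i T)
  have sum_insert: "(\<lambda>r. \<Sum>j\<in>insert i T. c j * g j r) = vadd (vscale (c i) (g i)) (\<lambda>r. \<Sum>j\<in>T. c j * g j r)"
    for g :: "'i \<Rightarrow> _ \<Rightarrow> 'k"
    using insert.hyps by (simp add: vadd_def vscale_def)
  have "finite (supp (\<lambda>r. \<Sum>j\<in>T. c j * h j r))"
    by (rule finite_subset[of _ "\<Union>j\<in>T. supp (h j)"])
       (use insert in \<open>auto simp: supp_def intro: sum.not_neutral_contains_not_neutral\<close>)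
  then show ?case
    unfolding sum_insert[of h] sum_insert[of "\<lambda>j. pushforward red (h j)"]
    using insert supp_vscale[of "c i" "h i"]
    by (simp add: pushforward_vadd pushforward_vscale finite_subset)
qed

lemma pushforward_fixed:
  assumes "finite (supp g)" "\<And>r. r \<in> supp g \<Longrightarrow> red r = Some r"
  shows "pushforward red g = g"
proof
  fix r
  have "pushforward red g r = (\<Sum>p\<in>{p\<in>supp g. red p = Some r}. g p)"
    by (rule pushforward_altdef) (use assms in auto)
  also have "{p\<in>supp g. red p = Some r} = supp g \<inter> {r}"
    using assms(2) by auto
  finally show "pushforward red g r = g r"
    by (cases "r \<in> supp g") (auto simp: supp_def)
qed

lemma sum_pushforward_fibres:
  assumes "finite (supp g)"
  shows "(\<Sum>q\<in>{q\<in>supp g. \<exists>y. red q = Some y \<and> P y}. g q) =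
         (\<Sum>y\<in>{y\<in>supp (pushforward red g). P y}. pushforward red g y)"
proof -
  let ?Q = "{q\<in>supp g. \<exists>y. red q = Some y \<and> P y}" and ?h = "\<lambda>q. the (red q)"
  have "(\<Sum>q\<in>?Q. g q) = (\<Sum>y\<in>?h ` ?Q. \<Sum>q\<in>{q\<in>?Q. ?h q = y}. g q)"
    by (rule sum.image_gen) (use assms in simp)
  also have "\<dots> = (\<Sum>y\<in>?h ` ?Q. pushforward red g y)"
  proof (rule sum.cong[OF refl])
    fix y assume "y \<in> ?h ` ?Q"
    then have "{q\<in>?Q. ?h q = y} = {q\<in>supp g. red q = Some y}" by auto
    then show "(\<Sum>q\<in>{q\<in>?Q. ?h q = y}. g q) = pushforward red g y"
      using pushforward_altdef[OF assms order_refl, where red = red and r = y] by simp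
  qed
  also have "\<dots> = (\<Sum>y\<in>{y\<in>supp (pushforward red g). P y}. pushforward red g y)"
  proof (rule sum.mono_neutral_right)
    show "finite (?h ` ?Q)" using assms by simp
    show "{y\<in>supp (pushforward red g). P y} \<subseteq> ?h ` ?Q"
      by (force elim: supp_pushforward)
  qed (auto simp: supp_def)
  finally show ?thesis .
qed

lemma amul_as_double_sum:
  assumes "finite (supp f)" "finite (supp g)"
  shows "amul f g u = (\<Sum>p\<in>supp f. \<Sum>q\<in>supp g.
           if pend q = pstart p \<and> pcomp p q = u then f p * g q else 0)"
proof -
  have "amul f g u =
      (\<Sum>(p, q)\<in>{(p, q). p \<in> supp f \<and> q \<in> supp g \<and> pend q = pstart p \<and> pcomp p q = u}. f p * g q)"
    by (rule amul_altdef) (use assms in auto)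
  also have "\<dots> = (\<Sum>(p, q)\<in>supp f \<times> supp g. if pend q = pstart p \<and> pcomp p q = u then f p * g q else 0)"
    by (rule sum.mono_neutral_cong_left) (use assms in \<open>auto split: if_splits\<close>)
  finally show ?thesis by (simp add: sum.cartesian_product)
qed

lemma pushforward_amul:
  assumes "finite (supp f)" "finite (supp g)"
  shows "pushforward red (amul f g) r = (\<Sum>p\<in>supp f. \<Sum>q\<in>supp g.
           if pend q = pstart p \<and> red (pcomp p q) = Some r then f p * g q else 0)"
proof -
  let ?U = "{u\<in>(\<lambda>(p, q). pcomp p q) ` (supp f \<times> supp g). red u = Some r}"
  have "pushforward red (amul f g) r =
      (\<Sum>u\<in>?U. \<Sum>p\<in>supp f. \<Sum>q\<in>supp g. if pend q = pstart p \<and> pcomp p q = u then f p * g q else 0)"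
    by (subst pushforward_altdef[where F = "(\<lambda>(p, q). pcomp p q) ` (supp f \<times> supp g)"])
       (use assms in \<open>auto simp: amul_as_double_sum elim!: supp_amul\<close>)
  also have "\<dots> = (\<Sum>p\<in>supp f. \<Sum>q\<in>supp g. \<Sum>u\<in>?U.
                      if pend q = pstart p \<and> pcomp p q = u then f p * g q else 0)"
    by (subst sum.swap) (simp add: sum.swap[of _ ?U])
  also have "\<dots> = (\<Sum>p\<in>supp f. \<Sum>q\<in>supp g.
                      if pend q = pstart p \<and> red (pcomp p q) = Some r then f p * g q else 0)"
  proof (intro sum.cong refl)
    fix p q assume "p \<in> supp f" "q \<in> supp g"
    then have "pcomp p q \<in> ?U \<longleftrightarrow> red (pcomp p q) = Some r" by force
    moreover have "finite ?U" using assms by simp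
    ultimately show "(\<Sum>u\<in>?U. if pend q = pstart p \<and> pcomp p q = u then f p * g q else 0) =
        (if pend q = pstart p \<and> red (pcomp p q) = Some r then f p * g q else 0)"
      by (cases "pend q = pstart p") (simp_all add: sum.delta)
  qed
  finally show ?thesis .
qed

lemma sum_if_mult_left:
  fixes c :: "'a::semiring_0"
  shows "finite S \<Longrightarrow> (\<Sum>x\<in>S. if P x then c * h x else 0) = c * (\<Sum>x\<in>{x\<in>S. P x}. h x)"
  by (subst sum.inter_filter) (auto simp: sum_distrib_left intro: sum.cong)

lemma sum_if_mult_right:
  fixes c :: "'a::semiring_0"
  shows "finite S \<Longrightarrow> (\<Sum>x\<in>S. if P x then h x * c else 0) = (\<Sum>x\<in>{x\<in>S. P x}. h x) * c"
  by (subst sum.inter_filter) (auto simp: sum_distrib_right intro: sum.cong)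

locale path_reduction = quiver V A s t
  for V :: "'v set" and A :: "'b set" and s t :: "'b \<Rightarrow> 'v" +
  fixes red :: "('v, 'b) path \<Rightarrow> ('v, 'b) path option"
  assumes red_ends: "red q = Some q' \<Longrightarrow> pstart q' = pstart q \<and> pend q' = pend q"
    and red_pcomp_right:
      "pend q = pstart p \<Longrightarrow> red (pcomp p q) = Option.bind (red q) (\<lambda>q'. red (pcomp p q'))"
    and red_pcomp_left:
      "pend q = pstart p \<Longrightarrow> red (pcomp p q) = Option.bind (red p) (\<lambda>p'. red (pcomp p' q))"
    and red_valid: "vp p \<Longrightarrow> red p = Some q \<Longrightarrow> vp q"
begin

lemma pushforward_in_path_alg: "f \<in> PA \<Longrightarrow> pushforward red f \<in> PA"
  using red_valid finite_supp_pushforward[of f red]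
  by (auto simp: path_alg_iff elim!: supp_pushforward)

lemma red_pcomp_right_eq_Some:
  "pend q = pstart p \<and> red (pcomp p q) = Some r \<longleftrightarrow>
   (\<exists>y. red q = Some y \<and> pend y = pstart p \<and> red (pcomp p y) = Some r)"
proof (cases "red q")
  case (Some y)
  then show ?thesis using red_ends[OF Some] red_pcomp_right[of q p] by auto
qed (use red_pcomp_right[of q p] in auto)

lemma red_pcomp_left_eq_Some:
  "pend q = pstart p \<and> red (pcomp p q) = Some r \<longleftrightarrow>
   (\<exists>y. red p = Some y \<and> pend q = pstart y \<and> red (pcomp y q) = Some r)"
proof (cases "red p")
  case (Some y)
  then show ?thesis using red_ends[OF Some] red_pcomp_left[of q p] by auto
qed (use red_pcomp_left[of q p] in auto)

lemma pushforward_amul_vzero_right: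
  assumes "finite (supp f)" "finite (supp g)" "pushforward red g = vzero"
  shows "pushforward red (amul f g) = vzero"
proof
  fix r
  have fibre: "{q\<in>supp g. pend q = pstart p \<and> red (pcomp p q) = Some r} =
      {q\<in>supp g. \<exists>y. red q = Some y \<and> pend y = pstart p \<and> red (pcomp p y) = Some r}" for p
    by (intro Collect_cong conj_cong refl red_pcomp_right_eq_Some)
  have "pushforward red (amul f g) r =
      (\<Sum>p\<in>supp f. f p * (\<Sum>q\<in>{q\<in>supp g. pend q = pstart p \<and> red (pcomp p q) = Some r}. g q))"
    using assms by (simp add: pushforward_amul sum_if_mult_left)
  also have "\<dots> = 0"
    unfolding fibre sum_pushforward_fibres[OF assms(2)] using assms(3) by (simp add: supp_def vzero_def)
  finally show "pushforward red (amul f g) r = vzero r" by (simp add: vzero_def)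
qed

lemma pushforward_amul_vzero_left:
  assumes "finite (supp f)" "finite (supp g)" "pushforward red f = vzero"
  shows "pushforward red (amul f g) = vzero"
proof
  fix r
  have fibre: "{p\<in>supp f. pend q = pstart p \<and> red (pcomp p q) = Some r} =
      {p\<in>supp f. \<exists>y. red p = Some y \<and> pend q = pstart y \<and> red (pcomp y q) = Some r}" for q
    by (intro Collect_cong conj_cong refl red_pcomp_left_eq_Some)
  have "pushforward red (amul f g) r =
      (\<Sum>q\<in>supp g. (\<Sum>p\<in>{p\<in>supp f. pend q = pstart p \<and> red (pcomp p q) = Some r}. f p) * g q)"
    unfolding pushforward_amul[OF assms(1,2)] by (subst sum.swap) (simp add: sum_if_mult_right assms)
  also have "\<dots> = 0"
    unfolding fibre sum_pushforward_fibres[OF assms(1)] using assms(3) by (simp add: supp_def vzero_def)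
  finally show "pushforward red (amul f g) r = vzero r" by (simp add: vzero_def)
qed

lemma kernel_is_ideal: "is_ideal V A s t {f \<in> (PA :: (_ \<Rightarrow> 'k::field) set). pushforward red f = vzero}"
  unfolding is_ideal_def
proof (intro conjI ballI allI impI; clarsimp?)
  show "vzero \<in> PA" by (rule vzero_in_path_alg)
next
  fix x y :: "_ \<Rightarrow> 'k"
  assume "x \<in> PA" "pushforward red x = vzero" "y \<in> PA" "pushforward red y = vzero"
  then show "vadd x y \<in> PA \<and> pushforward red (vadd x y) = vzero"
    by (simp add: vadd_in_path_alg pushforward_vadd path_alg_finite_supp) (simp add: vadd_def vzero_def)
next
  fix c :: 'k and x :: "_ \<Rightarrow> 'k"
  assume "x \<in> PA" "pushforward red x = vzero"
  then show "vscale c x \<in> PA \<and> pushforward red (vscale c x) = vzero"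
    by (simp add: vscale_in_path_alg pushforward_vscale path_alg_finite_supp) (simp add: vscale_def vzero_def)
next
  fix a x :: "_ \<Rightarrow> 'k"
  assume "a \<in> PA" "x \<in> PA" "pushforward red x = vzero"
  then show "amul a x \<in> PA \<and> pushforward red (amul a x) = vzero"
    and "amul x a \<in> PA \<and> pushforward red (amul x a) = vzero"
    by (simp_all add: amul_in_path_alg path_alg_finite_supp
        pushforward_amul_vzero_right pushforward_amul_vzero_left)
qed

end

locale path_reduction_system = path_reduction V A s t red
  for V :: "'v set" and A :: "'b set" and s t :: "'b \<Rightarrow> 'v" and red +
  fixes X :: "(('v, 'b) path \<Rightarrow> 'k::field) set"
  assumes gens_in_path_alg: "X \<subseteq> PA"
    and pushforward_gens: "g \<in> X \<Longrightarrow> pushforward red g = vzero"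
    and pbasis_congruent_pushforward:
      "vp p \<Longrightarrow> vsub (pbasis p) (pushforward red (pbasis p)) \<in> gen_ideal V A s t X"
begin

lemma is_ideal_gen_ideal: "is_ideal V A s t (gen_ideal V A s t X)"
  by (rule gen_ideal_is_ideal[OF gens_in_path_alg])

lemma congruent_pushforward:
  assumes "x \<in> PA"
  shows "vsub x (pushforward red x) \<in> gen_ideal V A s t X"
proof -
  have fin: "finite (supp x)" using assms by (rule path_alg_finite_supp)
  have "vsub x (pushforward red x) =
      (\<lambda>r. \<Sum>p\<in>supp x. x p * vsub (pbasis p) (pushforward red (pbasis p)) r)"
    by (subst (1 2) pbasis_expansion[OF fin])
      (simp add: pushforward_lincomb fin vsub_def right_diff_distrib sum_subtractf)
  also have "\<dots> \<in> gen_ideal V A s t X"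
    using assms by (intro ideal_lincomb[OF is_ideal_gen_ideal fin] pbasis_congruent_pushforward)
      (simp add: path_alg_iff)
  finally show ?thesis .
qed

lemma mem_gen_ideal_iff:
  assumes "x \<in> PA"
  shows "x \<in> gen_ideal V A s t X \<longleftrightarrow> pushforward red x = vzero"
proof
  assume "x \<in> gen_ideal V A s t X"
  moreover have "gen_ideal V A s t X \<subseteq> {f \<in> PA. pushforward red f = vzero}"
    using gens_in_path_alg pushforward_gens by (intro gen_ideal_least kernel_is_ideal) auto
  ultimately show "pushforward red x = vzero" by blast
next
  assume "pushforward red x = vzero"
  then show "x \<in> gen_ideal V A s t X"
    using congruent_pushforward[OF assms] by (simp add: vsub_def vzero_def)
qed

end

locale compatible_reductions =
  r1: path_reduction_system V A s t red1 X1 + r2: path_reduction_system V A s t red2 X2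
  for V :: "'v set" and A :: "'b set" and s t :: "'b \<Rightarrow> 'v" and red1 red2
    and X1 X2 :: "(('v, 'b) path \<Rightarrow> 'k::field) set" +
  assumes red2_fixes_red1: "valid_path V A s t p \<Longrightarrow> red1 p = Some q \<Longrightarrow> red2 q = Some q"
    and red1_fixes_red2: "valid_path V A s t p \<Longrightarrow> red2 p = Some q \<Longrightarrow> red1 q = Some q"
begin

lemma pushforward_red2_red1:
  assumes "x \<in> path_alg V A s t"
  shows "pushforward red2 (pushforward red1 x) = pushforward red1 x"
  using assms red2_fixes_red1
  by (intro pushforward_fixed finite_supp_pushforward)
     (auto simp: r1.path_alg_iff elim!: supp_pushforward)

lemma pushforward_red1_red2:
  assumes "x \<in> path_alg V A s t"
  shows "pushforward red1 (pushforward red2 x) = pushforward red2 x"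
  using assms red1_fixes_red2
  by (intro pushforward_fixed finite_supp_pushforward)
     (auto simp: r1.path_alg_iff elim!: supp_pushforward)

theorem quot_iso_gen_ideals: "quot_iso V A s t (gen_ideal V A s t X1) (gen_ideal V A s t X2)"
  unfolding quot_iso_def
proof (intro exI[of _ "pushforward red1"] conjI ballI allI)
  fix x :: "_ \<Rightarrow> 'k" assume x: "x \<in> path_alg V A s t"
  show "pushforward red1 x \<in> path_alg V A s t"
    using x by (rule r1.pushforward_in_path_alg)
  show "pushforward red1 x \<in> gen_ideal V A s t X2 \<longleftrightarrow> x \<in> gen_ideal V A s t X1"
    using x by (simp add: r1.mem_gen_ideal_iff r2.mem_gen_ideal_iff r1.pushforward_in_path_alg
        pushforward_red2_red1)
  show "pushforward red1 (vscale c x) = vscale c (pushforward red1 x)" for c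
    using x by (simp add: pushforward_vscale r1.path_alg_finite_supp)
next
  fix x y :: "_ \<Rightarrow> 'k" assume "x \<in> path_alg V A s t" "y \<in> path_alg V A s t"
  then show "pushforward red1 (vadd x y) = vadd (pushforward red1 x) (pushforward red1 y)"
    by (simp add: pushforward_vadd r1.path_alg_finite_supp)
next
  fix y :: "_ \<Rightarrow> 'k" assume y: "y \<in> path_alg V A s t"
  have "vsub (pushforward red1 (pushforward red2 y)) y = vscale (-1) (vsub y (pushforward red2 y))"
    using y by (simp add: pushforward_red1_red2 vsub_def vscale_def)
  also have "\<dots> \<in> gen_ideal V A s t X2"
    using y by (intro ideal_vscale[OF r2.is_ideal_gen_ideal] r2.congruent_pushforward)
  finally show "\<exists>x\<in>path_alg V A s t. vsub (pushforward red1 x) y \<in> gen_ideal V A s t X2"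
    using y r2.pushforward_in_path_alg by blast
qed

end

section \<open>Monomial relations\<close>

lemma not_successively_split:
  "\<not> successively P xs \<Longrightarrow> \<exists>ys a b zs. xs = ys @ a # b # zs \<and> \<not> P a b"
proof (induction P xs rule: successively.induct)
  case (3 P x y xs)
  then show ?case by (metis append_Cons append_Nil successively.simps(3))
qed simp_all

definition rel_pair :: "('v, 'b) path set \<Rightarrow> 'b \<Rightarrow> 'b \<Rightarrow> bool" where
  "rel_pair R a b \<longleftrightarrow> (\<exists>u w. (u, [a, b], w) \<in> R)"

definition rel_free :: "('v, 'b) path set \<Rightarrow> 'b list \<Rightarrow> bool" where
  "rel_free R = successively (\<lambda>a b. \<not> rel_pair R a b)"

lemma rel_free_appendD: "rel_free R (xs @ ys) \<Longrightarrow> rel_free R xs \<and> rel_free R ys"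
  by (simp add: rel_free_def successively_append_iff)

lemma not_rel_free_relation:
  assumes "r \<in> R" "length (parrs r) = 2"
  shows "\<not> rel_free R (parrs r)"
proof -
  obtain a b where ab: "parrs r = [a, b]"
    using assms(2) by (auto simp: numeral_2_eq_2 length_Suc_conv)
  then have "rel_pair R a b"
    using assms(1) pstart_parrs_pend[of r] unfolding rel_pair_def by metis
  then show ?thesis by (simp add: ab rel_free_def)
qed

definition mono_red :: "('v, 'b) path set \<Rightarrow> ('v, 'b) path \<Rightarrow> ('v, 'b) path option" where
  "mono_red R p = (if rel_free R (parrs p) then Some p else None)"

context quiver
begin

lemma pbasis_mem_ideal_if_not_rel_free:
  assumes J: "is_ideal V A s t J" and R: "\<And>r. r \<in> R \<Longrightarrow> vp r" and RJ: "pbasis ` R \<subseteq> J"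
    and p: "vp p" and bad: "\<not> rel_free R (parrs p)"
  shows "pbasis p \<in> (J :: (_ \<Rightarrow> 'k::field) set)"
proof -
  obtain pre a b post where arrs: "parrs p = pre @ a # b # post" and "rel_pair R a b"
    using bad not_successively_split unfolding rel_free_def by blast
  then obtain u w where r: "(u, [a, b], w) \<in> R" unfolding rel_pair_def by blast
  then have "u = s b" "w = t a" using R[OF r] by (auto simp: valid_path_Cons)
  then have "pbasis (s b, [a, b], t a) \<in> J" "vp (s b, [a, b], t a)" using r R RJ by auto
  moreover have "vp (pstart p, pre @ a # b # post, pend p)"
    using p pstart_parrs_pend[of p] by (simp add: arrs)
  then have "vp (t a, pre, pend p)" "vp (pstart p, post, s b)"
    by (auto simp: valid_path_append valid_path_Cons)
  ultimately have "pbasis (pcomp (pcomp (t a, pre, pend p) (s b, [a, b], t a)) (pstart p, post, s b)) \<in> J"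
    by (intro pbasis_pcomp_mem_ideal[OF J]) auto
  then show ?thesis by (simp add: pcomp_def arrs[symmetric] pstart_parrs_pend)
qed

lemma pbasis_congruent_mono_red:
  assumes R: "\<And>r. r \<in> R \<Longrightarrow> vp r" "pbasis ` R \<subseteq> (PA :: (_ \<Rightarrow> 'k::field) set)" and p: "vp p"
  shows "vsub (pbasis p) (pushforward (mono_red R) (pbasis p)) \<in> gen_ideal V A s t (pbasis ` R :: (_ \<Rightarrow> 'k) set)"
proof (cases "rel_free R (parrs p)")
  case True
  then show ?thesis
    using ideal_vzero[OF gen_ideal_is_ideal[OF R(2)]] by (simp add: pushforward_pbasis mono_red_def)
next
  case False
  then have "pbasis p \<in> gen_ideal V A s t (pbasis ` R :: (_ \<Rightarrow> 'k) set)"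
    using R p by (intro pbasis_mem_ideal_if_not_rel_free[OF gen_ideal_is_ideal[OF R(2)] _ gen_ideal_superset])
  then show ?thesis
    using False by (simp add: pushforward_pbasis mono_red_def vsub_def vzero_def)
qed

lemma mono_red_system:
  assumes R: "\<And>r. r \<in> R \<Longrightarrow> vp r \<and> length (parrs r) = 2"
  shows "path_reduction_system V A s t (mono_red R) (pbasis ` R :: (_ \<Rightarrow> 'k::field) set)"
proof
  fix p q :: "('v, 'b) path" assume "pend q = pstart p"
  show "mono_red R (pcomp p q) = Option.bind (mono_red R q) (\<lambda>q'. mono_red R (pcomp p q'))"
    and "mono_red R (pcomp p q) = Option.bind (mono_red R p) (\<lambda>p'. mono_red R (pcomp p' q))"
    by (auto simp: mono_red_def dest: rel_free_appendD)
next
  show gens: "pbasis ` R \<subseteq> (PA :: (_ \<Rightarrow> 'k) set)"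
    using R by (auto intro!: pbasis_in_path_alg)
  fix p assume "vp p"
  then show "vsub (pbasis p) (pushforward (mono_red R) (pbasis p)) \<in>
      gen_ideal V A s t (pbasis ` R :: (_ \<Rightarrow> 'k) set)"
    using R by (intro pbasis_congruent_mono_red[OF _ gens]) auto
next
  fix g :: "_ \<Rightarrow> 'k" assume "g \<in> pbasis ` R"
  then obtain r where "r \<in> R" "g = pbasis r" by blast
  then show "pushforward (mono_red R) g = vzero"
    using R not_rel_free_relation[of r R] by (simp add: pushforward_pbasis mono_red_def)
qed (auto simp: mono_red_def split: if_splits)

end

section \<open>Collapsing special loops\<close>

text \<open>The special loop \<open>\<epsilon>\<^sub>i\<close> is the letter \<open>Inr i\<close>; \<open>collapse\<close> shrinks each run of equal
  special loops to one letter and leaves runs of ordinary loops \<open>Inl a\<close> alone.\<close>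

definition cons_collapse :: "'a + 'c \<Rightarrow> ('a + 'c) list \<Rightarrow> ('a + 'c) list" where
  "cons_collapse x ws = (if ws \<noteq> [] \<and> hd ws = x \<and> \<not> isl x then ws else x # ws)"

primrec collapse :: "('a + 'c) list \<Rightarrow> ('a + 'c) list" where
  "collapse [] = []"
| "collapse (x # xs) = cons_collapse x (collapse xs)"

definition loop_reduced :: "('a + 'c) list \<Rightarrow> bool" where
  "loop_reduced = successively (\<lambda>x y. x = y \<longrightarrow> isl x)"

lemma cons_collapse_ne [simp]: "cons_collapse x ws \<noteq> []"
  and hd_cons_collapse [simp]: "hd (cons_collapse x ws) = x"
  by (auto simp: cons_collapse_def)

lemma cons_collapse_idem: "\<not> isl x \<Longrightarrow> cons_collapse x (cons_collapse x ws) = cons_collapse x ws"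
  by (simp add: cons_collapse_def)

lemma hd_collapse: "xs \<noteq> [] \<Longrightarrow> hd (collapse xs) = hd xs"
  by (cases xs) auto

lemma set_collapse: "set (collapse xs) \<subseteq> set xs"
  by (induction xs) (auto simp: cons_collapse_def)

lemma loop_reduced_collapse: "loop_reduced (collapse xs)"
  by (induction xs) (auto simp: loop_reduced_def cons_collapse_def successively_Cons)

lemma collapse_loop_reduced: "loop_reduced xs \<Longrightarrow> collapse xs = xs"
  by (induction xs) (auto simp: loop_reduced_def cons_collapse_def successively_Cons hd_collapse)

lemma collapse_collapse [simp]: "collapse (collapse xs) = collapse xs"
  by (rule collapse_loop_reduced[OF loop_reduced_collapse])

lemma collapse_append_collapse_right: "collapse (xs @ collapse ys) = collapse (xs @ ys)"
  by (induction xs) simp_all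

lemma collapse_cons_collapse_append: "collapse (cons_collapse x ws @ ys) = cons_collapse x (collapse (ws @ ys))"
  by (cases ws) (auto simp: cons_collapse_def cons_collapse_idem)

lemma collapse_append_collapse_left: "collapse (collapse xs @ ys) = collapse (xs @ ys)"
  by (induction xs) (simp_all add: collapse_cons_collapse_append)

lemma successively_collapse_iff:
  assumes "\<And>x y. \<not> P x y \<Longrightarrow> isl x \<and> isl y"
  shows "successively P (collapse xs) \<longleftrightarrow> successively P xs"
proof (induction xs)
  case (Cons x xs)
  then show ?case
    using assms[of x x] by (cases xs) (auto simp: cons_collapse_def successively_Cons hd_collapse)
qed simp

lemma successively_conj_iff:
  "successively (\<lambda>x y. P x y \<and> Q x y) xs \<longleftrightarrow> successively P xs \<and> successively Q xs"
  by (induction xs rule: induct_list012) auto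

definition collapse_path :: "('v, 'a + 'c) path \<Rightarrow> ('v, 'a + 'c) path" where
  "collapse_path p = (pstart p, collapse (parrs p), pend p)"

definition collapse_red :: "('v, 'a + 'c) path set \<Rightarrow> ('v, 'a + 'c) path \<Rightarrow> ('v, 'a + 'c) path option" where
  "collapse_red R p = (if rel_free R (parrs p) then Some (collapse_path p) else None)"

locale skew_gentle_triple =
  fixes V :: "'v set" and Q1 :: "'a set" and s t :: "'a \<Rightarrow> 'v"
    and Sp :: "'v set" and I :: "('v, 'a) path set"
  assumes skew_gentle: "skew_gentle V Q1 s t Sp I"
begin

lemma Inl_in_sp_arrows [simp]: "Inl a \<in> sp_arrows Q1 Sp \<longleftrightarrow> a \<in> Q1"
  and Inr_in_sp_arrows [simp]: "Inr i \<in> sp_arrows Q1 Sp \<longleftrightarrow> i \<in> Sp"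
  by (auto simp: sp_arrows_def)

lemma quiver_Q1: "quiver V Q1 s t"
  using skew_gentle by unfold_locales (auto simp: skew_gentle_def)

sublocale quiver V "sp_arrows Q1 Sp" "sp_src s" "sp_tgt t"
  using skew_gentle by unfold_locales (auto simp: skew_gentle_def sp_arrows_def)

lemma valid_lift_path: "p \<in> I \<Longrightarrow> vp (lift_path p)"
proof -
  have "valid_path V Q1 s t (u, xs, w) \<Longrightarrow> vp (u, map Inl xs, w)" for u xs w
    by (induction xs arbitrary: w)
      (auto simp: quiver.valid_path_Cons[OF quiver_Q1] quiver.valid_path_Nil[OF quiver_Q1] valid_path_Cons)
  moreover assume "p \<in> I"
  ultimately show ?thesis
    using skew_gentle pstart_parrs_pend[of p] by (auto simp: skew_gentle_def lift_path_def)
qed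

lemma valid_eps: "i \<in> Sp \<Longrightarrow> vp (eps i)"
  and valid_eps_sq: "i \<in> Sp \<Longrightarrow> vp (eps_sq i)"
  using skew_gentle by (auto simp: skew_gentle_def eps_def eps_sq_def valid_path_Cons)

lemma I_sp_valid_length: "r \<in> I_sp I Sp \<Longrightarrow> vp r \<and> length (parrs r) = 2"
  using skew_gentle valid_lift_path valid_eps_sq
  by (auto simp: skew_gentle_def gentle_pair_def I_sp_def)

lemma rel_pair_lift_isl: "rel_pair (lift_path ` I) a b \<Longrightarrow> isl a \<and> isl b"
  by (auto simp: rel_pair_def lift_path_def Cons_eq_map_conv)

lemma rel_free_lift_collapse_iff: "rel_free (lift_path ` I) (collapse xs) \<longleftrightarrow> rel_free (lift_path ` I) xs"
  unfolding rel_free_def using rel_pair_lift_isl by (intro successively_collapse_iff) blast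

lemma rel_free_I_sp_iff:
  assumes "set xs \<subseteq> sp_arrows Q1 Sp"
  shows "rel_free (I_sp I Sp) xs \<longleftrightarrow> rel_free (lift_path ` I) xs \<and> loop_reduced xs"
proof -
  have "\<not> rel_pair (I_sp I Sp) a b \<longleftrightarrow> \<not> rel_pair (lift_path ` I) a b \<and> (a = b \<longrightarrow> isl a)"
    if "a \<in> sp_arrows Q1 Sp" for a b
    using that by (auto simp: rel_pair_def I_sp_def eps_sq_def sp_arrows_def)
  then have "rel_free (I_sp I Sp) xs \<longleftrightarrow>
      successively (\<lambda>a b. \<not> rel_pair (lift_path ` I) a b \<and> (a = b \<longrightarrow> isl a)) xs"
    unfolding rel_free_def using assms by (intro successively_cong) auto
  then show ?thesis
    by (simp add: successively_conj_iff rel_free_def loop_reduced_def)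
qed

lemma valid_collapse: "vp (u, xs, w) \<Longrightarrow> vp (u, collapse xs, w)"
proof (induction xs arbitrary: w)
  case (Cons x xs)
  then have "vp (u, collapse xs, sp_src s x)" by (simp add: valid_path_Cons)
  moreover have "sp_src s x = sp_tgt t x" if "\<not> isl x"
    using that by (cases x) auto
  ultimately show ?case
    using Cons.prems by (auto simp: cons_collapse_def valid_path_Cons neq_Nil_conv)
qed simp

lemma pbasis_collapse_congruent:
  assumes J: "is_ideal V (sp_arrows Q1 Sp) (sp_src s) (sp_tgt t) (J :: (_ \<Rightarrow> 'k::field) set)"
    and eps: "\<And>i. i \<in> Sp \<Longrightarrow> vsub (pbasis (eps_sq i)) (pbasis (eps i)) \<in> J"
  shows "vp (v, xs, w) \<Longrightarrow> vsub (pbasis (v, xs, w)) (pbasis (v, collapse xs, w)) \<in> J"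
proof (induction xs arbitrary: w)
  case Nil
  then show ?case using ideal_vzero[OF J] by simp
next
  case (Cons x xs)
  then have x: "x \<in> sp_arrows Q1 Sp" "sp_tgt t x = w" "vp (v, xs, sp_src s x)"
    by (auto simp: valid_path_Cons)
  have "vp (sp_src s x, [x], w)"
    using x arrow_ends by (simp add: valid_path_Cons)
  then have "vsub (pbasis (pcomp (sp_src s x, [x], w) (v, xs, sp_src s x)))
                  (pbasis (pcomp (sp_src s x, [x], w) (v, collapse xs, sp_src s x))) \<in> J"
    using Cons.IH x by (intro pbasis_congruence_pcomp_left[OF J]) auto
  then have step: "vsub (pbasis (v, x # xs, w)) (pbasis (v, x # collapse xs, w)) \<in> J"
    by (simp add: pcomp_def)
  have merge: "vsub (pbasis (v, x # collapse xs, w)) (pbasis (v, cons_collapse x (collapse xs), w)) \<in> J"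
  proof (cases "collapse xs \<noteq> [] \<and> hd (collapse xs) = x \<and> \<not> isl x")
    case True
    obtain i where "x = Inr i" using True by (cases x) auto
    moreover have "collapse xs = x # tl (collapse xs)" using True by (metis list.collapse)
    ultimately obtain zs where i: "x = Inr i" "collapse xs = Inr i # zs" by simp
    then have "i \<in> Sp" "w = i" "vp (v, zs, i)"
      using x valid_collapse[OF x(3)] by (auto simp: valid_path_Cons)
    then have "vsub (pbasis (pcomp (eps_sq i) (v, zs, i))) (pbasis (pcomp (eps i) (v, zs, i))) \<in> J"
      by (intro pbasis_congruence_pcomp_right[OF J eps]) (auto simp: eps_def eps_sq_def)
    then show ?thesis
      using True i \<open>w = i\<close> by (simp add: pcomp_def eps_def eps_sq_def cons_collapse_def)
  next
    case False
    then show ?thesis using ideal_vzero[OF J] by (auto simp: cons_collapse_def)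
  qed
  show ?case
    using ideal_vsub_trans[OF J step merge] by simp
qed

lemma rel_free_lift_append_collapse:
  "rel_free (lift_path ` I) (xs @ collapse ys) \<longleftrightarrow> rel_free (lift_path ` I) (xs @ ys)"
  "rel_free (lift_path ` I) (collapse xs @ ys) \<longleftrightarrow> rel_free (lift_path ` I) (xs @ ys)"
  by (metis rel_free_lift_collapse_iff collapse_append_collapse_right collapse_append_collapse_left)+

lemma Isg_gens_in_path_alg: "Isg_gens I Sp \<subseteq> (PA :: (_ \<Rightarrow> 'k::field) set)"
  using valid_lift_path valid_eps valid_eps_sq
  by (auto simp: Isg_gens_def intro!: pbasis_in_path_alg vsub_in_path_alg)

lemma pushforward_collapse_red_Isg_gens:
  assumes "g \<in> (Isg_gens I Sp :: (_ \<Rightarrow> 'k::field) set)"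
  shows "pushforward (collapse_red (lift_path ` I)) g = vzero"
proof -
  consider (rel) r where "r \<in> lift_path ` I" "g = pbasis r"
    | (eps) i where "g = vsub (pbasis (eps_sq i)) (pbasis (eps i))"
    using assms unfolding Isg_gens_def by blast
  then show ?thesis
  proof cases
    case rel
    then have "\<not> rel_free (lift_path ` I) (parrs r)"
      using I_sp_valid_length[of r] by (simp add: I_sp_def not_rel_free_relation)
    then show ?thesis by (simp add: rel(2) pushforward_pbasis collapse_red_def)
  next
    case eps
    have "rel_free (lift_path ` I) [Inr i, Inr i]"
      using rel_pair_lift_isl[of "Inr i" "Inr i"] by (auto simp: rel_free_def)
    then show ?thesis
      by (simp add: eps pushforward_vsub pushforward_pbasis collapse_red_def collapse_path_def
          eps_def eps_sq_def cons_collapse_def rel_free_def)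
  qed
qed

lemma pbasis_congruent_collapse_red:
  assumes p: "vp p"
  shows "vsub (pbasis p) (pushforward (collapse_red (lift_path ` I)) (pbasis p)) \<in>
    gen_ideal V (sp_arrows Q1 Sp) (sp_src s) (sp_tgt t) (Isg_gens I Sp :: (_ \<Rightarrow> 'k::field) set)"
    (is "_ \<in> ?J")
proof -
  have J: "is_ideal V (sp_arrows Q1 Sp) (sp_src s) (sp_tgt t) ?J"
    by (rule gen_ideal_is_ideal[OF Isg_gens_in_path_alg])
  have lift_J: "pbasis ` lift_path ` I \<subseteq> ?J"
    and eps_J: "\<And>i. i \<in> Sp \<Longrightarrow> vsub (pbasis (eps_sq i)) (pbasis (eps i)) \<in> ?J"
    using gen_ideal_superset[of "Isg_gens I Sp"] by (auto simp: Isg_gens_def)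
  show ?thesis
  proof (cases "rel_free (lift_path ` I) (parrs p)")
    case True
    then show ?thesis
      using pbasis_collapse_congruent[OF J eps_J, of "pstart p" "parrs p" "pend p"] p
      by (simp add: pushforward_pbasis collapse_red_def collapse_path_def pstart_parrs_pend)
  next
    case False
    then have "pbasis p \<in> ?J"
      using valid_lift_path p by (intro pbasis_mem_ideal_if_not_rel_free[OF J _ lift_J]) auto
    then show ?thesis
      using False by (simp add: pushforward_pbasis collapse_red_def vsub_def vzero_def)
  qed
qed

lemma collapse_red_system:
  "path_reduction_system V (sp_arrows Q1 Sp) (sp_src s) (sp_tgt t)
     (collapse_red (lift_path ` I)) (Isg_gens I Sp :: (_ \<Rightarrow> 'k::field) set)"
proof
  fix p q :: "('v, 'a + 'v) path" assume "pend q = pstart p"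
  show "collapse_red (lift_path ` I) (pcomp p q) =
      Option.bind (collapse_red (lift_path ` I) q) (\<lambda>q'. collapse_red (lift_path ` I) (pcomp p q'))"
    and "collapse_red (lift_path ` I) (pcomp p q) =
      Option.bind (collapse_red (lift_path ` I) p) (\<lambda>p'. collapse_red (lift_path ` I) (pcomp p' q))"
    by (auto simp: collapse_red_def collapse_path_def rel_free_lift_append_collapse
        collapse_append_collapse_right collapse_append_collapse_left dest: rel_free_appendD)
next
  fix p q assume "vp p" "collapse_red (lift_path ` I) p = Some q"
  then show "vp q"
    using valid_collapse[of "pstart p" "parrs p" "pend p"]
    by (auto simp: collapse_red_def collapse_path_def pstart_parrs_pend split: if_splits)
qed (auto simp: collapse_red_def collapse_path_def Isg_gens_in_path_alg
    pushforward_collapse_red_Isg_gens pbasis_congruent_collapse_red split: if_splits)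

lemma mono_red_I_sp_system:
  "path_reduction_system V (sp_arrows Q1 Sp) (sp_src s) (sp_tgt t)
     (mono_red (I_sp I Sp)) (Isp_gens I Sp :: (_ \<Rightarrow> 'k::field) set)"
  unfolding Isp_gens_def by (rule mono_red_system) (rule I_sp_valid_length)

lemma mono_red_fixes_collapse_red:
  assumes "vp p" "collapse_red (lift_path ` I) p = Some q"
  shows "mono_red (I_sp I Sp) q = Some q"
proof -
  have q: "q = (pstart p, collapse (parrs p), pend p)" and "rel_free (lift_path ` I) (parrs p)"
    using assms(2) by (auto simp: collapse_red_def collapse_path_def split: if_splits)
  moreover have "set (collapse (parrs p)) \<subseteq> sp_arrows Q1 Sp"
    using set_collapse valid_path_arrows[OF assms(1)] by blast
  ultimately show ?thesis
    by (simp add: mono_red_def rel_free_I_sp_iff rel_free_lift_collapse_iff loop_reduced_collapse)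
qed

lemma collapse_red_fixes_mono_red:
  assumes "vp p" "mono_red (I_sp I Sp) p = Some q"
  shows "collapse_red (lift_path ` I) q = Some q"
proof -
  have "q = p" and "rel_free (I_sp I Sp) (parrs p)"
    using assms(2) by (auto simp: mono_red_def split: if_splits)
  then show ?thesis
    using valid_path_arrows[OF assms(1)]
    by (simp add: collapse_red_def collapse_path_def rel_free_I_sp_iff collapse_loop_reduced pstart_parrs_pend)
qed

lemma compatible_collapse_mono:
  "compatible_reductions V (sp_arrows Q1 Sp) (sp_src s) (sp_tgt t)
     (collapse_red (lift_path ` I)) (mono_red (I_sp I Sp)) (Isg_gens I Sp) (Isp_gens I Sp :: (_ \<Rightarrow> 'k::field) set)"
  and compatible_mono_collapse:
  "compatible_reductions V (sp_arrows Q1 Sp) (sp_src s) (sp_tgt t)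
     (mono_red (I_sp I Sp)) (collapse_red (lift_path ` I)) (Isp_gens I Sp) (Isg_gens I Sp :: (_ \<Rightarrow> 'k::field) set)"
  unfolding compatible_reductions_def compatible_reductions_axioms_def
  using collapse_red_system mono_red_I_sp_system mono_red_fixes_collapse_red collapse_red_fixes_mono_red
  by blast+

end

theorem mainTheorem2:
  fixes V :: "'v set" and Q1 :: "'a set" and s t :: "'a \<Rightarrow> 'v"
    and Sp :: "'v set" and I :: "('v,'a) path set"
  assumes "alg_closed TYPE('k::field)"
    and "skew_gentle V Q1 s t Sp I"
  shows "quot_iso V (sp_arrows Q1 Sp) (sp_src s) (sp_tgt t)
           (ideal_sg V Q1 s t Sp I :: (('v, 'a + 'v) path \<Rightarrow> 'k::field) set)
           (ideal_sp V Q1 s t Sp I)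
       \<and> (fin_dim_quot V (sp_arrows Q1 Sp) (sp_src s) (sp_tgt t)
             (ideal_sg V Q1 s t Sp I :: (('v, 'a + 'v) path \<Rightarrow> 'k) set)
          \<longleftrightarrow> fin_dim_quot V (sp_arrows Q1 Sp) (sp_src s) (sp_tgt t)
             (ideal_sp V Q1 s t Sp I :: (('v, 'a + 'v) path \<Rightarrow> 'k) set))"
proof -
  interpret skew_gentle_triple V Q1 s t Sp I
    by unfold_locales (rule assms(2))
  interpret sg_sp: compatible_reductions V "sp_arrows Q1 Sp" "sp_src s" "sp_tgt t"
      "collapse_red (lift_path ` I)" "mono_red (I_sp I Sp)" "Isg_gens I Sp" "Isp_gens I Sp :: (_ \<Rightarrow> 'k) set"
    by (rule compatible_collapse_mono)
  interpret sp_sg: compatible_reductions V "sp_arrows Q1 Sp" "sp_src s" "sp_tgt t"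
      "mono_red (I_sp I Sp)" "collapse_red (lift_path ` I)" "Isp_gens I Sp" "Isg_gens I Sp :: (_ \<Rightarrow> 'k) set"
    by (rule compatible_mono_collapse)
  show ?thesis
    unfolding ideal_sg_def ideal_sp_def
    using sg_sp.quot_iso_gen_ideals sp_sg.quot_iso_gen_ideals
      fin_dim_quot_transfer[OF sg_sp.r2.is_ideal_gen_ideal] fin_dim_quot_transfer[OF sg_sp.r1.is_ideal_gen_ideal]
    by blast
qed

end
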